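(* Let $D\ge 1$, and let $\mathbf{x}\sim\mathcal{N}(\boldsymbol{\mu}_x,\operatorname{diag}(\boldsymbol{\sigma}_x^2))$ and $\mathbf{y}\sim\mathcal{N}(\boldsymbol{\mu}_y,\operatorname{diag}(\boldsymbol{\sigma}_y^2))$ be independent Gaussian random vectors in $\mathbb{R}^D$, with $\boldsymbol{\mu}_x,\boldsymbol{\mu}_y\in\mathbb{R}^D$ and $\boldsymbol{\sigma}_x,\boldsymbol{\sigma}_y\in(0,\infty)^D$. Define the normalized vectors $\tilde{\mathbf{x}}=(\mathbf{x}-\boldsymbol{\mu}_x)/\boldsymbol{\sigma}_x$ and $\tilde{\mathbf{y}}=(\mathbf{y}-\boldsymbol{\mu}_y)/\boldsymbol{\sigma}_y$ (entrywise division). Suppose that \[ 12\left(\sqrt{(\boldsymbol{\sigma}_x^2)^\top\boldsymbol{\sigma}_y^2}+\|\boldsymbol{\sigma}_x\circ\boldsymbol{\sigma}_y\|_\infty\right)+5\left(\sqrt{(\boldsymbol{\sigma}_y^2)^\top\boldsymbol{\mu}_x^2}+\sqrt{(\boldsymbol{\sigma}_x^2)^\top\boldsymbol{\mu}_y^2}+\|\boldsymbol{\sigma}_y\circ|\boldsymbol{\mu}_x|\|_\infty+\|\boldsymbol{\sigma}_x\circ|\boldsymbol{\mu}_y|\|_\infty\right)\le|\boldsymbol{\mu}_x^\top\boldsymbol{\mu}_y|. \] Then \[ \Pr\left(\operatorname{sign}(\mathbf{x}^\top\mathbf{y})\neq\operatorname{sign}(\tilde{\mathbf{x}}^\top\tilde{\mathbf{y}})\right)\ge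 0.4 . \]
   Context: Squares $\boldsymbol{\sigma}^2,\boldsymbol{\mu}^2$, absolute values $|\boldsymbol{\mu}|$ and divisions of vectors are taken entrywise; $\circ$ denotes the entrywise (Hadamard) product and $\|\cdot\|_\infty$ the maximum absolute entry. *)

theory Defs
  imports "HOL-Probability.Probability"
begin

abbreviation vec_space :: "nat \<Rightarrow> (nat \<Rightarrow> real) measure" where
  "vec_space D \<equiv> PiM {..<D} (\<lambda>_. borel)"

definition diag_gaussian :: "nat \<Rightarrow> (nat \<Rightarrow> real) \<Rightarrow> (nat \<Rightarrow> real) \<Rightarrow> (nat \<Rightarrow> real) measure" where
  "diag_gaussian D mu sd = PiM {..<D} (\<lambda>i. density lborel (normal_density (mu i) (sd i)))"

definition sup_norm :: "nat \<Rightarrow> (nat \<Rightarrow> real) \<Rightarrow> real" where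
  "sup_norm D v = Max ((\<lambda>i. \<bar>v i\<bar>) ` {..<D})"

end

theory Submission
  imports Defs
begin

(* Write Z = x.y and T for the inner product of the standardized vectors, and m = mu_x.mu_y.
   By independence, E Z = m and Var Z = V = sum_i (sx_i^2 sy_i^2 + sy_i^2 mux_i^2 + sx_i^2 muy_i^2);
   the hypothesis gives 25 V <= m^2, so by Chebyshev sgn Z differs from sgn m with probability at
   most 1/25. On the other hand, reflecting x at its mean, x -> 2 mu_x - x, preserves the joint law
   of (x, y) and flips the sign of T, so T is symmetric and sgn T differs from sgn m with
   probability at least 1/2. Hence sgn Z and sgn T disagree with probability >= 1/2 - 1/25 > 0.4. *)

lemma normal_density_first_moment:
  assumes "0 < s"
  shows "integrable (density lborel (normal_density m s)) (\<lambda>x. x)"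
    and "(\<integral>x. x \<partial>density lborel (normal_density m s)) = m"
  using integrable_normal_moment_nz_1[OF assms] integral_normal_moment_nz_1[OF assms]
  by (simp_all add: integrable_density integral_density)

lemma normal_density_second_moment:
  assumes "0 < s"
  shows "integrable (density lborel (normal_density m s)) (\<lambda>x. x\<^sup>2)"
    and "(\<integral>x. x\<^sup>2 \<partial>density lborel (normal_density m s)) = s\<^sup>2 + m\<^sup>2"
proof -
  let ?N = "density lborel (normal_density m s)"
  interpret N: prob_space ?N
    using prob_space_normal_density[OF assms] .
  have centered: "integrable ?N (\<lambda>x. (x - m)\<^sup>2)"
    using integrable_normal_moment[OF assms, of m 2] by (simp add: integrable_density)
  have "(\<lambda>x. x\<^sup>2) = (\<lambda>x. (x - m)\<^sup>2 + 2 * m * x - m\<^sup>2)"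
    by (simp add: fun_eq_iff power2_eq_square algebra_simps)
  with centered normal_density_first_moment(1)[OF assms]
  show square: "integrable ?N (\<lambda>x. x\<^sup>2)"
    by simp
  have "distributed ?N lborel (\<lambda>x. x) (normal_density m s)"
    by (simp add: distributed_def distr_id2)
  then have "N.variance (\<lambda>x. x) = s\<^sup>2"
    using N.normal_distributed_variance[OF assms] by blast
  then show "(\<integral>x. x\<^sup>2 \<partial>?N) = s\<^sup>2 + m\<^sup>2"
    using N.variance_eq[OF normal_density_first_moment(1)[OF assms] square]
      normal_density_first_moment(2)[OF assms] by simp
qed

lemma distr_normal_density_reflect:
  assumes "0 < s"
  shows "distr (density lborel (normal_density m s)) borel (\<lambda>x. 2 * m - x)
       = density lborel (normal_density m s)"
proof -
  let ?N = "density lborel (normal_density m s)"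
  interpret N: prob_space ?N
    using prob_space_normal_density[OF assms] .
  have "distributed ?N lborel (\<lambda>x. x) (normal_density m s)"
    by (simp add: distributed_def distr_id2)
  from N.normal_density_affine[OF this assms, of "-1" "2 * m"]
  have "distr ?N lborel (\<lambda>x. 2 * m - x) = ?N"
    by (simp add: distributed_def)
  then show ?thesis
    by (metis distr_cong sets_lborel)
qed

lemma (in product_sigma_finite) distr_PiM_componentwise_invariant:
  assumes "finite I"
    and f: "\<And>i. i \<in> I \<Longrightarrow> f i \<in> measurable (M i) (M i)"
    and inv: "\<And>i. i \<in> I \<Longrightarrow> distr (M i) (M i) (f i) = M i"
  shows "distr (PiM I M) (PiM I M) (\<lambda>x. \<lambda>i\<in>I. f i (x i)) = PiM I M"
proof (rule PiM_eqI[OF \<open>finite I\<close>])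
  have fm: "(\<lambda>x. \<lambda>i\<in>I. f i (x i)) \<in> measurable (PiM I M) (PiM I M)"
    using f by (intro measurable_restrict) (auto intro: measurable_compose[OF measurable_component_singleton])
  fix A assume A: "\<And>i. i \<in> I \<Longrightarrow> A i \<in> sets (M i)"
  have "(\<lambda>x. \<lambda>i\<in>I. f i (x i)) -` Pi\<^sub>E I A \<inter> space (PiM I M)
      = Pi\<^sub>E I (\<lambda>i. f i -` A i \<inter> space (M i))"
    by (auto simp: space_PiM PiE_iff)
  moreover have "f i -` A i \<inter> space (M i) \<in> sets (M i)" if "i \<in> I" for i
    using measurable_sets[OF f A] that by blast
  moreover have "emeasure (M i) (f i -` A i \<inter> space (M i)) = emeasure (M i) (A i)" if "i \<in> I" for i
    using emeasure_distr[OF f A, of i] inv that by simp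
  ultimately show "emeasure (distr (PiM I M) (PiM I M) (\<lambda>x. \<lambda>i\<in>I. f i (x i))) (Pi\<^sub>E I A)
      = (\<Prod>i\<in>I. emeasure (M i) (A i))"
    using A \<open>finite I\<close>
    by (simp add: emeasure_distr[OF fm] sets_PiM_I_finite emeasure_PiM)
qed simp

lemma integral_PiM_component:
  fixes g :: "'a \<Rightarrow> real"
  assumes "\<And>i. i \<in> I \<Longrightarrow> prob_space (M i)" "i \<in> I" "g \<in> borel_measurable (M i)"
  shows "integrable (PiM I M) (\<lambda>x. g (x i)) \<longleftrightarrow> integrable (M i) g"
    and "(\<integral>x. g (x i) \<partial>PiM I M) = integral\<^sup>L (M i) g"
  using integrable_distr_eq[of "\<lambda>x. x i" "PiM I M" "M i" g]
    integral_distr[of "\<lambda>x. x i" "PiM I M" "M i" g] distr_PiM_component[of I M i, OF assms(1,2)]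
    measurable_component_singleton[OF assms(2), of M] assms(3)
  by simp_all

lemma (in product_prob_space) integral_PiM_two_components:
  fixes g h :: "'a \<Rightarrow> real"
  assumes "finite J" "i \<in> J" "j \<in> J" "i \<noteq> j"
    and "integrable (M i) g" "integrable (M j) h"
  shows "integrable (PiM J M) (\<lambda>x. g (x i) * h (x j))"
    and "(\<integral>x. g (x i) * h (x j) \<partial>PiM J M) = integral\<^sup>L (M i) g * integral\<^sup>L (M j) h"
proof -
  define f where "f k = (if k = i then g else if k = j then h else (\<lambda>_. 1))" for k
  have prod_pair: "(\<Prod>k\<in>J. F k) = F i * F j" if "\<And>k. k \<notin> {i, j} \<Longrightarrow> F k = 1"
    for F :: "'i \<Rightarrow> real"
  proof -
    have "(\<Prod>k\<in>J. F k) = (\<Prod>k\<in>{i, j}. F k)"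
      using assms(1-3) that by (intro prod.mono_neutral_right) auto
    then show ?thesis
      using assms(4) by simp
  qed
  have f_int: "integrable (M k) (f k)" for k
    using assms(5,6) by (simp add: f_def)
  have "(\<Prod>k\<in>J. f k (x k)) = g (x i) * h (x j)" for x
    using assms(4) by (subst prod_pair) (auto simp: f_def)
  moreover have "(\<Prod>k\<in>J. integral\<^sup>L (M k) (f k)) = integral\<^sup>L (M i) g * integral\<^sup>L (M j) h"
    using assms(4) by (subst prod_pair) (auto simp: f_def M.prob_space)
  ultimately show "integrable (PiM J M) (\<lambda>x. g (x i) * h (x j))"
    and "(\<integral>x. g (x i) * h (x j) \<partial>PiM J M) = integral\<^sup>L (M i) g * integral\<^sup>L (M j) h"
    using product_integrable_prod[OF assms(1) f_int] product_integral_prod[OF assms(1) f_int]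
    by simp_all
qed

definition has_mean_diag_cov :: "(nat \<Rightarrow> real) measure \<Rightarrow> nat \<Rightarrow> (nat \<Rightarrow> real) \<Rightarrow> (nat \<Rightarrow> real) \<Rightarrow> bool" where
  "has_mean_diag_cov P D mu sd \<longleftrightarrow>
     (\<forall>i<D. integrable P (\<lambda>x. x i) \<and> (\<integral>x. x i \<partial>P) = mu i) \<and>
     (\<forall>i<D. \<forall>j<D. integrable P (\<lambda>x. x i * x j) \<and>
        (\<integral>x. x i * x j \<partial>P) = mu i * mu j + (if i = j then (sd i)\<^sup>2 else 0))"

(* The factors with index >= D do not affect diag_gaussian, but product_prob_space needs all of
   them to be probability spaces; they get standard deviation 1. *)
lemma diag_gaussian_product_prob_space:
  assumes "\<And>i. i < D \<Longrightarrow> 0 < sd i"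
  obtains N where "product_prob_space N" and "diag_gaussian D mu sd = PiM {..<D} N"
    and "\<And>i. i < D \<Longrightarrow> N i = density lborel (normal_density (mu i) (sd i))"
proof
  define N where "N i = density lborel (normal_density (mu i) (if i < D then sd i else 1))" for i
  show "product_prob_space N"
    using assms by (intro product_prob_spaceI) (simp add: N_def prob_space_normal_density)
  show "diag_gaussian D mu sd = PiM {..<D} N"
    unfolding diag_gaussian_def by (rule PiM_cong) (simp_all add: N_def)
  show "\<And>i. i < D \<Longrightarrow> N i = density lborel (normal_density (mu i) (sd i))"
    by (simp add: N_def)
qed

lemma has_mean_diag_cov_diag_gaussian:
  assumes sd: "\<And>i. i < D \<Longrightarrow> 0 < sd i"
  shows "has_mean_diag_cov (diag_gaussian D mu sd) D mu sd"
proof -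
  obtain N where "product_prob_space N" and G: "diag_gaussian D mu sd = PiM {..<D} N"
    and N: "\<And>i. i < D \<Longrightarrow> N i = density lborel (normal_density (mu i) (sd i))"
    using diag_gaussian_product_prob_space[of D sd mu, OF sd] by metis
  interpret product_prob_space N by fact
  have first: "integrable (N i) (\<lambda>t. t)" "(\<integral>t. t \<partial>N i) = mu i" if "i < D" for i
    using normal_density_first_moment[OF sd[OF that]] N[OF that] by simp_all
  have second: "integrable (N i) (\<lambda>t. t * t)" "(\<integral>t. t * t \<partial>N i) = mu i * mu i + (sd i)\<^sup>2"
    if "i < D" for i
    using normal_density_second_moment[OF sd[OF that]] N[OF that] by (simp_all add: power2_eq_square)
  have N_prob: "\<And>k. k \<in> {..<D} \<Longrightarrow> prob_space (N k)"
    by (rule prob_space)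
  have N_borel: "g \<in> borel_measurable (N i)" if "i < D" "g \<in> borel_measurable borel" for i g
    using N[OF that(1)] that(2) by simp
  have component: "integrable (PiM {..<D} N) (\<lambda>x. g (x i)) \<longleftrightarrow> integrable (N i) g"
    "(\<integral>x. g (x i) \<partial>PiM {..<D} N) = integral\<^sup>L (N i) g"
    if "i < D" "g \<in> borel_measurable borel" for i and g :: "real \<Rightarrow> real"
    using integral_PiM_component[of "{..<D}" N i g, OF N_prob] N_borel[OF that] that(1) by simp_all
  have "integrable (PiM {..<D} N) (\<lambda>x. x i) \<and> (\<integral>x. x i \<partial>PiM {..<D} N) = mu i" if "i < D" for i
    unfolding component[OF that, of "\<lambda>t. t", OF measurable_ident_sets[OF refl]] using first[OF that] by blast
  moreover have "integrable (PiM {..<D} N) (\<lambda>x. x i * x j) \<and>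
      (\<integral>x. x i * x j \<partial>PiM {..<D} N) = mu i * mu j + (if i = j then (sd i)\<^sup>2 else 0)"
    if "i < D" "j < D" for i j
  proof (cases "i = j")
    case True
    have square_measurable: "(\<lambda>t::real. t * t) \<in> borel_measurable borel"
      by measurable
    show ?thesis
      unfolding True component[OF that(2) square_measurable] using second[OF that(2)] by simp
  next
    case False
    from that have "i \<in> {..<D}" "j \<in> {..<D}"
      by simp_all
    then show ?thesis
      using integral_PiM_two_components[OF finite_lessThan _ _ False first(1)[OF that(1)] first(1)[OF that(2)]]
        first(2)[OF that(1)] first(2)[OF that(2)] False
      by simp
  qed
  ultimately show ?thesis
    unfolding has_mean_diag_cov_def G by blast
qed

lemma diag_gaussian_reflect:
  assumes sd: "\<And>i. i < D \<Longrightarrow> 0 < sd i"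
  shows "distr (diag_gaussian D mu sd) (vec_space D) (\<lambda>x. \<lambda>i\<in>{..<D}. 2 * mu i - x i)
       = diag_gaussian D mu sd"
proof -
  obtain N where "product_prob_space N" and G: "diag_gaussian D mu sd = PiM {..<D} N"
    and N: "\<And>i. i < D \<Longrightarrow> N i = density lborel (normal_density (mu i) (sd i))"
    using diag_gaussian_product_prob_space[of D sd mu, OF sd] by metis
  interpret product_prob_space N by fact
  have "distr (PiM {..<D} N) (PiM {..<D} N) (\<lambda>x. \<lambda>i\<in>{..<D}. 2 * mu i - x i) = PiM {..<D} N"
  proof (rule distr_PiM_componentwise_invariant)
    fix i assume "i \<in> {..<D}"
    then show "(\<lambda>t. 2 * mu i - t) \<in> measurable (N i) (N i)"
      and "distr (N i) (N i) (\<lambda>t. 2 * mu i - t) = N i"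
      using N distr_normal_density_reflect[OF sd] by (simp_all cong: distr_cong)
  qed simp
  moreover have "sets (vec_space D) = sets (PiM {..<D} N)"
    using N by (intro sets_PiM_cong) simp_all
  ultimately show ?thesis
    unfolding G by (simp cong: distr_cong)
qed

lemma sum_sum_rank_one_plus_diag:
  fixes a b s t :: "'i \<Rightarrow> 'r::comm_ring_1"
  assumes "finite A"
  shows "(\<Sum>i\<in>A. \<Sum>j\<in>A. (a i * a j + (if i = j then s i else 0)) * (b i * b j + (if i = j then t i else 0)))
       = (\<Sum>i\<in>A. a i * b i)\<^sup>2 + (\<Sum>i\<in>A. s i * t i + t i * (a i)\<^sup>2 + s i * (b i)\<^sup>2)"
proof -
  have "(a i * a j + (if i = j then s i else 0)) * (b i * b j + (if i = j then t i else 0))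
      = (a i * b i) * (a j * b j) + (if i = j then s i * t i + t i * (a i)\<^sup>2 + s i * (b i)\<^sup>2 else 0)"
    for i j
    by (simp add: algebra_simps power2_eq_square)
  then show ?thesis
    using assms by (simp add: sum.distrib power2_eq_square sum_product)
qed

lemma (in prob_space) has_mean_diag_cov_distrD:
  assumes X: "random_variable (vec_space D) X"
    and cov: "has_mean_diag_cov (distr M (vec_space D) X) D mu sd"
    and "i < D" "j < D"
  shows "integrable M (\<lambda>\<omega>. X \<omega> i)" and "expectation (\<lambda>\<omega>. X \<omega> i) = mu i"
    and "integrable M (\<lambda>\<omega>. X \<omega> i * X \<omega> j)"
    and "expectation (\<lambda>\<omega>. X \<omega> i * X \<omega> j) = mu i * mu j + (if i = j then (sd i)\<^sup>2 else 0)"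
proof -
  have [measurable]: "(\<lambda>x. x k) \<in> borel_measurable (vec_space D)" if "k < D" for k
    using that by (intro measurable_component_singleton) simp
  show "integrable M (\<lambda>\<omega>. X \<omega> i)" and "expectation (\<lambda>\<omega>. X \<omega> i) = mu i"
    using cov \<open>i < D\<close> integrable_distr_eq[OF X, of "\<lambda>x. x i"] integral_distr[OF X, of "\<lambda>x. x i"]
    by (simp_all add: has_mean_diag_cov_def)
  show "integrable M (\<lambda>\<omega>. X \<omega> i * X \<omega> j)"
    and "expectation (\<lambda>\<omega>. X \<omega> i * X \<omega> j) = mu i * mu j + (if i = j then (sd i)\<^sup>2 else 0)"
    using cov \<open>i < D\<close> \<open>j < D\<close> integrable_distr_eq[OF X, of "\<lambda>x. x i * x j"]
      integral_distr[OF X, of "\<lambda>x. x i * x j"]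
    by (simp_all add: has_mean_diag_cov_def)
qed

lemma (in prob_space) inner_product_indep_moments:
  fixes X Y :: "'a \<Rightarrow> nat \<Rightarrow> real"
  assumes indep: "indep_var (vec_space D) X (vec_space D) Y"
    and X: "has_mean_diag_cov (distr M (vec_space D) X) D mux sx"
    and Y: "has_mean_diag_cov (distr M (vec_space D) Y) D muy sy"
  shows "integrable M (\<lambda>\<omega>. (\<Sum>i<D. X \<omega> i * Y \<omega> i)\<^sup>2)"
    and "expectation (\<lambda>\<omega>. \<Sum>i<D. X \<omega> i * Y \<omega> i) = (\<Sum>i<D. mux i * muy i)"
    and "variance (\<lambda>\<omega>. \<Sum>i<D. X \<omega> i * Y \<omega> i)
       = (\<Sum>i<D. (sx i)\<^sup>2 * (sy i)\<^sup>2 + (sy i)\<^sup>2 * (mux i)\<^sup>2 + (sx i)\<^sup>2 * (muy i)\<^sup>2)"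
proof -
  note Xm = indep_var_rv1[OF indep] and Ym = indep_var_rv2[OF indep]
  note momX = has_mean_diag_cov_distrD[OF Xm X] and momY = has_mean_diag_cov_distrD[OF Ym Y]
  have [measurable]: "(\<lambda>x. x k) \<in> borel_measurable (vec_space D)" if "k < D" for k
    using that by (intro measurable_component_singleton) simp
  have indep_mult: "integrable M (\<lambda>\<omega>. f (X \<omega>) * g (Y \<omega>))
      \<and> expectation (\<lambda>\<omega>. f (X \<omega>) * g (Y \<omega>)) = expectation (\<lambda>\<omega>. f (X \<omega>)) * expectation (\<lambda>\<omega>. g (Y \<omega>))"
    if "f \<in> borel_measurable (vec_space D)" "g \<in> borel_measurable (vec_space D)"
      "integrable M (\<lambda>\<omega>. f (X \<omega>))" "integrable M (\<lambda>\<omega>. g (Y \<omega>))"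
    for f g :: "(nat \<Rightarrow> real) \<Rightarrow> real"
    using indep_var_compose[OF indep that(1,2)] that(3,4)
      indep_var_integrable[of "f \<circ> X" "g \<circ> Y"] indep_var_lebesgue_integral[of "f \<circ> X" "g \<circ> Y"]
    by (simp add: comp_def)
  have lin_int: "integrable M (\<lambda>\<omega>. X \<omega> i * Y \<omega> i)"
    and lin_exp: "expectation (\<lambda>\<omega>. X \<omega> i * Y \<omega> i) = mux i * muy i"
    if "i < D" for i
    using indep_mult[of "\<lambda>x. x i" "\<lambda>x. x i"] momX(1,2)[OF that that] momY(1,2)[OF that that] that
    by simp_all
  have quad_int: "integrable M (\<lambda>\<omega>. (X \<omega> i * X \<omega> j) * (Y \<omega> i * Y \<omega> j))"
    and quad_exp: "expectation (\<lambda>\<omega>. (X \<omega> i * X \<omega> j) * (Y \<omega> i * Y \<omega> j))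
        = (mux i * mux j + (if i = j then (sx i)\<^sup>2 else 0)) * (muy i * muy j + (if i = j then (sy i)\<^sup>2 else 0))"
    if "i < D" "j < D" for i j
    using indep_mult[of "\<lambda>x. x i * x j" "\<lambda>x. x i * x j"] momX(3,4)[OF that] momY(3,4)[OF that] that
    by simp_all
  have square: "(\<Sum>i<D. X \<omega> i * Y \<omega> i)\<^sup>2 = (\<Sum>i<D. \<Sum>j<D. (X \<omega> i * X \<omega> j) * (Y \<omega> i * Y \<omega> j))" for \<omega>
    by (simp add: power2_eq_square sum_product algebra_simps)
  show int_square: "integrable M (\<lambda>\<omega>. (\<Sum>i<D. X \<omega> i * Y \<omega> i)\<^sup>2)"
    unfolding square by (intro Bochner_Integration.integrable_sum) (simp add: quad_int)
  have int: "integrable M (\<lambda>\<omega>. \<Sum>i<D. X \<omega> i * Y \<omega> i)"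
    by (intro Bochner_Integration.integrable_sum) (simp add: lin_int)
  show mean: "expectation (\<lambda>\<omega>. \<Sum>i<D. X \<omega> i * Y \<omega> i) = (\<Sum>i<D. mux i * muy i)"
    by (subst Bochner_Integration.integral_sum) (simp_all add: lin_int lin_exp)
  have "expectation (\<lambda>\<omega>. (\<Sum>i<D. X \<omega> i * Y \<omega> i)\<^sup>2)
      = (\<Sum>i<D. expectation (\<lambda>\<omega>. \<Sum>j<D. (X \<omega> i * X \<omega> j) * (Y \<omega> i * Y \<omega> j)))"
    unfolding square
    by (intro Bochner_Integration.integral_sum Bochner_Integration.integrable_sum) (simp add: quad_int)
  also have "\<dots> = (\<Sum>i<D. \<Sum>j<D. expectation (\<lambda>\<omega>. (X \<omega> i * X \<omega> j) * (Y \<omega> i * Y \<omega> j)))"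
    by (intro sum.cong refl Bochner_Integration.integral_sum) (simp add: quad_int)
  also have "\<dots> = (\<Sum>i<D. \<Sum>j<D. (mux i * mux j + (if i = j then (sx i)\<^sup>2 else 0))
                                   * (muy i * muy j + (if i = j then (sy i)\<^sup>2 else 0)))"
    by (intro sum.cong refl) (simp add: quad_exp)
  also have "\<dots> = (\<Sum>i<D. mux i * muy i)\<^sup>2 + (\<Sum>i<D. (sx i)\<^sup>2 * (sy i)\<^sup>2 + (sy i)\<^sup>2 * (mux i)\<^sup>2 + (sx i)\<^sup>2 * (muy i)\<^sup>2)"
    by (rule sum_sum_rank_one_plus_diag) simp
  finally show "variance (\<lambda>\<omega>. \<Sum>i<D. X \<omega> i * Y \<omega> i)
       = (\<Sum>i<D. (sx i)\<^sup>2 * (sy i)\<^sup>2 + (sy i)\<^sup>2 * (mux i)\<^sup>2 + (sx i)\<^sup>2 * (muy i)\<^sup>2)"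
    using variance_eq[OF int int_square] mean by simp
qed

lemma (in prob_space) prob_sgn_ne_sgn_expectation_le:
  fixes Z :: "'a \<Rightarrow> real"
  assumes [measurable]: "random_variable borel Z"
    and square: "integrable M (\<lambda>\<omega>. (Z \<omega>)\<^sup>2)" and nonzero: "expectation Z \<noteq> 0"
  shows "prob {\<omega> \<in> space M. sgn (Z \<omega>) \<noteq> sgn (expectation Z)} \<le> variance Z / (expectation Z)\<^sup>2"
proof -
  let ?m = "expectation Z"
  have "{\<omega> \<in> space M. sgn (Z \<omega>) \<noteq> sgn ?m} \<subseteq> {\<omega> \<in> space M. \<bar>Z \<omega> - ?m\<bar> \<ge> \<bar>?m\<bar>}"
    by (auto simp: sgn_if split: if_splits)
  then have "prob {\<omega> \<in> space M. sgn (Z \<omega>) \<noteq> sgn ?m} \<le> prob {\<omega> \<in> space M. \<bar>Z \<omega> - ?m\<bar> \<ge> \<bar>?m\<bar>}"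
    by (intro finite_measure_mono) measurable
  also have "\<dots> \<le> variance Z / \<bar>?m\<bar>\<^sup>2"
    using nonzero by (intro Chebyshev_inequality square) auto
  finally show ?thesis
    by simp
qed

lemma (in prob_space) prob_sgn_ne_ge_half:
  fixes T :: "'a \<Rightarrow> real"
  assumes [measurable]: "random_variable borel T"
    and sym: "distr M borel (\<lambda>\<omega>. - T \<omega>) = distr M borel T" and "s \<noteq> 0"
  shows "1 / 2 \<le> prob {\<omega> \<in> space M. sgn (T \<omega>) \<noteq> s}"
proof -
  have [measurable]: "{t :: real. sgn t = s} \<in> sets borel"
    by measurable
  have "prob {\<omega> \<in> space M. sgn (T \<omega>) = s} = measure (distr M borel T) {t. sgn t = s}"
    by (subst measure_distr) (auto intro!: arg_cong[where f = prob])
  also have "\<dots> = prob {\<omega> \<in> space M. sgn (- T \<omega>) = s}"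
    unfolding sym[symmetric] by (subst measure_distr) (auto intro!: arg_cong[where f = prob])
  also have "\<dots> \<le> prob {\<omega> \<in> space M. sgn (T \<omega>) \<noteq> s}"
    using \<open>s \<noteq> 0\<close> by (intro finite_measure_mono) (auto simp: sgn_minus)
  finally have "prob {\<omega> \<in> space M. sgn (T \<omega>) = s} \<le> prob {\<omega> \<in> space M. sgn (T \<omega>) \<noteq> s}" .
  moreover have "space M - {\<omega> \<in> space M. sgn (T \<omega>) \<noteq> s} = {\<omega> \<in> space M. sgn (T \<omega>) = s}"
    by auto
  then have "prob {\<omega> \<in> space M. sgn (T \<omega>) = s} = 1 - prob {\<omega> \<in> space M. sgn (T \<omega>) \<noteq> s}"
    using prob_compl[of "{\<omega> \<in> space M. sgn (T \<omega>) \<noteq> s}"] by simp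
  ultimately show ?thesis
    by linarith
qed

lemma (in prob_space) distr_indep_transform_fst:
  assumes indep: "indep_var S X T Y" and r: "r \<in> measurable S S"
    and inv: "distr (distr M S X) S r = distr M S X"
  shows "distr M (S \<Otimes>\<^sub>M T) (\<lambda>\<omega>. (r (X \<omega>), Y \<omega>)) = distr M (S \<Otimes>\<^sub>M T) (\<lambda>\<omega>. (X \<omega>, Y \<omega>))"
proof -
  have "indep_var S (\<lambda>\<omega>. r (X \<omega>)) T Y"
    using indep_var_compose[OF indep r, of "\<lambda>y. y" T] by (simp add: comp_def)
  moreover have "distr M S (\<lambda>\<omega>. r (X \<omega>)) = distr M S X"
    using inv distr_distr[OF r indep_var_rv1[OF indep]] by (simp add: comp_def)
  ultimately show ?thesis
    using indep unfolding indep_var_distribution_eq by metis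
qed

lemma (in prob_space) standardized_inner_product_symmetric:
  fixes X Y :: "'a \<Rightarrow> nat \<Rightarrow> real"
  assumes indep: "indep_var (vec_space D) X (vec_space D) Y"
    and reflect: "distr (distr M (vec_space D) X) (vec_space D) (\<lambda>x. \<lambda>i\<in>{..<D}. 2 * mux i - x i)
                = distr M (vec_space D) X"
  shows "distr M borel (\<lambda>\<omega>. - (\<Sum>i<D. ((X \<omega> i - mux i) / sx i) * ((Y \<omega> i - muy i) / sy i)))
       = distr M borel (\<lambda>\<omega>. \<Sum>i<D. ((X \<omega> i - mux i) / sx i) * ((Y \<omega> i - muy i) / sy i))"
proof -
  define f where "f p = (\<Sum>i<D. ((fst p i - mux i) / sx i) * ((snd p i - muy i) / sy i))"
    for p :: "(nat \<Rightarrow> real) \<times> (nat \<Rightarrow> real)"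
  define r where "r x = (\<lambda>i\<in>{..<D}. 2 * mux i - x i)" for x :: "nat \<Rightarrow> real"
  have [measurable]: "f \<in> borel_measurable (vec_space D \<Otimes>\<^sub>M vec_space D)"
    unfolding f_def by measurable
  have [measurable]: "r \<in> measurable (vec_space D) (vec_space D)"
    unfolding r_def by measurable
  note [measurable] = indep_var_rv1[OF indep] indep_var_rv2[OF indep]
  have f_r: "f (r x, y) = - f (x, y)" for x y
  proof -
    have "(2 * mux i - x i - mux i) / sx i = - ((x i - mux i) / sx i)" for i
      by (simp add: minus_divide_left)
    then show ?thesis
      by (simp add: f_def r_def sum_negf[symmetric])
  qed
  have joint: "distr M (vec_space D \<Otimes>\<^sub>M vec_space D) (\<lambda>\<omega>. (r (X \<omega>), Y \<omega>))
      = distr M (vec_space D \<Otimes>\<^sub>M vec_space D) (\<lambda>\<omega>. (X \<omega>, Y \<omega>))"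
    using reflect unfolding r_def[abs_def] by (intro distr_indep_transform_fst[OF indep]) measurable
  have "distr M borel (\<lambda>\<omega>. f (r (X \<omega>), Y \<omega>))
      = distr (distr M (vec_space D \<Otimes>\<^sub>M vec_space D) (\<lambda>\<omega>. (r (X \<omega>), Y \<omega>))) borel f"
    by (subst distr_distr) (simp_all add: comp_def)
  also have "\<dots> = distr M borel (\<lambda>\<omega>. f (X \<omega>, Y \<omega>))"
    unfolding joint by (subst distr_distr) (simp_all add: comp_def)
  finally show ?thesis
    by (simp add: f_r) (simp add: f_def)
qed

lemma (in prob_space) prob_ne_triangle:
  fixes f g :: "'a \<Rightarrow> real"
  assumes [measurable]: "f \<in> borel_measurable M" "g \<in> borel_measurable M"
  shows "prob {\<omega> \<in> space M. g \<omega> \<noteq> c}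
       \<le> prob {\<omega> \<in> space M. f \<omega> \<noteq> g \<omega>} + prob {\<omega> \<in> space M. f \<omega> \<noteq> c}"
proof -
  have "{\<omega> \<in> space M. g \<omega> \<noteq> c} \<subseteq> {\<omega> \<in> space M. f \<omega> \<noteq> g \<omega>} \<union> {\<omega> \<in> space M. f \<omega> \<noteq> c}"
    by auto
  then show ?thesis
    by (intro order_trans[OF finite_measure_mono measure_Un_le]) measurable
qed

lemma sup_norm_nonneg: "0 < D \<Longrightarrow> 0 \<le> sup_norm D v"
  unfolding sup_norm_def by (rule order_trans[OF abs_ge_zero[of "v 0"]]) (rule Max_ge, auto)

lemma sum_le_square_sum_sqrt:
  fixes a b c :: real
  assumes "0 \<le> a" "0 \<le> b" "0 \<le> c"
  shows "a + b + c \<le> (sqrt a + sqrt b + sqrt c)\<^sup>2"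
proof -
  have "(sqrt a + sqrt b + sqrt c)\<^sup>2 = a + b + c + 2 * (sqrt a * sqrt b + sqrt a * sqrt c + sqrt b * sqrt c)"
    using assms by (simp add: power2_eq_square algebra_simps)
  moreover have "0 \<le> sqrt a * sqrt b + sqrt a * sqrt c + sqrt b * sqrt c"
    using assms by simp
  ultimately show ?thesis
    by simp
qed

lemma inner_product_variance_bound:
  fixes mux muy sx sy :: "nat \<Rightarrow> real"
  assumes "0 < D" and sx: "\<And>i. i < D \<Longrightarrow> 0 < sx i" and sy: "\<And>i. i < D \<Longrightarrow> 0 < sy i"
    and hyp: "12 * (sqrt (\<Sum>i<D. (sx i)\<^sup>2 * (sy i)\<^sup>2) + sup_norm D (\<lambda>i. sx i * sy i))
         + 5 * (sqrt (\<Sum>i<D. (sy i)\<^sup>2 * (mux i)\<^sup>2) + sqrt (\<Sum>i<D. (sx i)\<^sup>2 * (muy i)\<^sup>2)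
                + sup_norm D (\<lambda>i. sy i * \<bar>mux i\<bar>) + sup_norm D (\<lambda>i. sx i * \<bar>muy i\<bar>))
         \<le> \<bar>\<Sum>i<D. mux i * muy i\<bar>"
  defines "V \<equiv> \<Sum>i<D. (sx i)\<^sup>2 * (sy i)\<^sup>2 + (sy i)\<^sup>2 * (mux i)\<^sup>2 + (sx i)\<^sup>2 * (muy i)\<^sup>2"
  shows "0 < V" and "25 * V \<le> (\<Sum>i<D. mux i * muy i)\<^sup>2"
proof -
  show "0 < V"
    unfolding V_def
  proof (rule sum_pos)
    show "{..<D} \<noteq> {}"
      using \<open>0 < D\<close> by (simp add: lessThan_empty_iff)
    fix i assume "i \<in> {..<D}"
    then have "0 < (sx i)\<^sup>2 * (sy i)\<^sup>2"
      using sx[of i] sy[of i] by simp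
    then show "0 < (sx i)\<^sup>2 * (sy i)\<^sup>2 + (sy i)\<^sup>2 * (mux i)\<^sup>2 + (sx i)\<^sup>2 * (muy i)\<^sup>2"
      by (intro add_pos_nonneg) auto
  qed simp
  define S where "S = sqrt (\<Sum>i<D. (sx i)\<^sup>2 * (sy i)\<^sup>2) + sqrt (\<Sum>i<D. (sy i)\<^sup>2 * (mux i)\<^sup>2)
      + sqrt (\<Sum>i<D. (sx i)\<^sup>2 * (muy i)\<^sup>2)"
  have "0 \<le> sqrt (\<Sum>i<D. (sx i)\<^sup>2 * (sy i)\<^sup>2)"
    by (simp add: sum_nonneg)
  then have "5 * S \<le> \<bar>\<Sum>i<D. mux i * muy i\<bar>"
    using hyp sup_norm_nonneg[OF \<open>0 < D\<close>, of "\<lambda>i. sx i * sy i"]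
      sup_norm_nonneg[OF \<open>0 < D\<close>, of "\<lambda>i. sy i * \<bar>mux i\<bar>"]
      sup_norm_nonneg[OF \<open>0 < D\<close>, of "\<lambda>i. sx i * \<bar>muy i\<bar>"]
    unfolding S_def distrib_left by linarith
  moreover have "0 \<le> S"
    unfolding S_def by (simp add: sum_nonneg)
  ultimately have "25 * S\<^sup>2 \<le> (\<Sum>i<D. mux i * muy i)\<^sup>2"
    using power_mono[of "5 * S" "\<bar>\<Sum>i<D. mux i * muy i\<bar>" 2] by (simp add: power_mult_distrib)
  moreover have "V \<le> S\<^sup>2"
    unfolding V_def S_def sum.distrib by (intro sum_le_square_sum_sqrt sum_nonneg) auto
  ultimately show "25 * V \<le> (\<Sum>i<D. mux i * muy i)\<^sup>2"
    by linarith
qed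

theorem mainTheorem1:
  fixes M :: "'a measure" and D :: nat
    and X Y :: "'a \<Rightarrow> nat \<Rightarrow> real"
    and mux muy sx sy :: "nat \<Rightarrow> real"
  assumes "prob_space M"
    and "D \<ge> 1"
    and "\<And>i. i < D \<Longrightarrow> sx i > 0"
    and "\<And>i. i < D \<Longrightarrow> sy i > 0"
    and "X \<in> measurable M (vec_space D)"
    and "Y \<in> measurable M (vec_space D)"
    and "distr M (vec_space D) X = diag_gaussian D mux sx"
    and "distr M (vec_space D) Y = diag_gaussian D muy sy"
    and "prob_space.indep_var M (vec_space D) X (vec_space D) Y"
    and "12 * (sqrt (\<Sum>i<D. (sx i)\<^sup>2 * (sy i)\<^sup>2) + sup_norm D (\<lambda>i. sx i * sy i))
         + 5 * (sqrt (\<Sum>i<D. (sy i)\<^sup>2 * (mux i)\<^sup>2) + sqrt (\<Sum>i<D. (sx i)\<^sup>2 * (muy i)\<^sup>2)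
                + sup_norm D (\<lambda>i. sy i * \<bar>mux i\<bar>) + sup_norm D (\<lambda>i. sx i * \<bar>muy i\<bar>))
         \<le> \<bar>\<Sum>i<D. mux i * muy i\<bar>"
  shows "measure M {\<omega> \<in> space M.
            sgn (\<Sum>i<D. X \<omega> i * Y \<omega> i)
            \<noteq> sgn (\<Sum>i<D. ((X \<omega> i - mux i) / sx i) * ((Y \<omega> i - muy i) / sy i))} \<ge> 0.4"
proof -
  interpret prob_space M by fact
  note indep = assms(9) and [measurable] = assms(5,6)
  define Z where "Z \<omega> = (\<Sum>i<D. X \<omega> i * Y \<omega> i)" for \<omega>
  define T where "T \<omega> = (\<Sum>i<D. ((X \<omega> i - mux i) / sx i) * ((Y \<omega> i - muy i) / sy i))" for \<omega>
  define m where "m = (\<Sum>i<D. mux i * muy i)"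
  define V where "V = (\<Sum>i<D. (sx i)\<^sup>2 * (sy i)\<^sup>2 + (sy i)\<^sup>2 * (mux i)\<^sup>2 + (sx i)\<^sup>2 * (muy i)\<^sup>2)"
  have [measurable]: "Z \<in> borel_measurable M" "T \<in> borel_measurable M"
    unfolding Z_def T_def by measurable
  have "has_mean_diag_cov (distr M (vec_space D) X) D mux sx"
    and "has_mean_diag_cov (distr M (vec_space D) Y) D muy sy"
    using assms(3,4,7,8) by (simp_all add: has_mean_diag_cov_diag_gaussian)
  then have Z_moments: "integrable M (\<lambda>\<omega>. (Z \<omega>)\<^sup>2)" "expectation Z = m" "variance Z = V"
    unfolding Z_def m_def V_def by (rule inner_product_indep_moments[OF indep])+
  have "0 < V" and "25 * V \<le> m\<^sup>2"
    using inner_product_variance_bound[OF _ assms(3,4,10)] assms(2) unfolding V_def m_def by simp_all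
  then have "m \<noteq> 0"
    by auto
  then have "prob {\<omega> \<in> space M. sgn (Z \<omega>) \<noteq> sgn m} \<le> V / m\<^sup>2"
    using prob_sgn_ne_sgn_expectation_le[of Z] Z_moments by simp
  also have "\<dots> \<le> 1 / 25"
    using \<open>25 * V \<le> m\<^sup>2\<close> \<open>m \<noteq> 0\<close> by (simp add: field_simps)
  finally have Z_wrong: "prob {\<omega> \<in> space M. sgn (Z \<omega>) \<noteq> sgn m} \<le> 1 / 25" .
  have "distr M borel (\<lambda>\<omega>. - T \<omega>) = distr M borel T"
    unfolding T_def using assms(3,7)
    by (intro standardized_inner_product_symmetric[OF indep]) (simp add: diag_gaussian_reflect)
  then have T_wrong: "1 / 2 \<le> prob {\<omega> \<in> space M. sgn (T \<omega>) \<noteq> sgn m}"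
    using \<open>m \<noteq> 0\<close> by (intro prob_sgn_ne_ge_half) (simp_all add: sgn_eq_0_iff)
  show ?thesis
    using prob_ne_triangle[of "\<lambda>\<omega>. sgn (Z \<omega>)" "\<lambda>\<omega>. sgn (T \<omega>)" "sgn m"] Z_wrong T_wrong
    unfolding Z_def T_def by simp
qed

end
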